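(* Let $1\le k<n/2$ and let $\Omega$ be the set of $k$-subsets of $\{1,\dots,n\}$ with the natural action of $\mathrm{Sym}(n)$. Then $\mathrm{Sym}(n)$ contains an element of prime order $p$ that is quasi-semiregular on $\Omega$ if and only if $k<p$ and $p\mid n-k$. Moreover, any such quasi-semiregular element of order $p$ has cycle type $1^kp^{(n-k)/p}$ on $\{1,\dots,n\}$.
   Context: A permutation $g$ is quasi-semiregular if $\langle g\rangle$ has a unique fixed point and acts semiregularly (only the identity fixes a point) on the remaining points. *)

theory Defs
  imports "HOL-Algebra.Sym_Groups" "HOL-Algebra.Multiplicative_Group" "HOL-Computational_Algebra.Primes"
begin

definition quasi_semiregular ::
  "('g, 'b) monoid_scheme \<Rightarrow> ('g \<Rightarrow> 'a \<Rightarrow> 'a) \<Rightarrow> 'a set \<Rightarrow> 'g \<Rightarrow> bool" where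
  "quasi_semiregular G phi Omega g \<longleftrightarrow>
     (\<exists>w0\<in>Omega.
        {w\<in>Omega. \<forall>h\<in>generate G {g}. phi h w = w} = {w0} \<and>
        (\<forall>w\<in>Omega - {w0}. \<forall>h\<in>generate G {g}. phi h w = w \<longrightarrow> h = \<one>\<^bsub>G\<^esub>))"

definition k_subsets :: "nat \<Rightarrow> nat \<Rightarrow> nat set set" where
  "k_subsets n k = {A. A \<subseteq> {1..n} \<and> card A = k}"

definition set_action :: "(nat \<Rightarrow> nat) \<Rightarrow> nat set \<Rightarrow> nat set" where
  "set_action g A = g ` A"

text \<open>Cycle type 1^k p^((n-k)/p) on {1..n}: exactly k fixed points, and every
  other point lies in a cycle of length p.\<close>
definition has_cycle_type_1k_p :: "nat \<Rightarrow> nat \<Rightarrow> nat \<Rightarrow> (nat \<Rightarrow> nat) \<Rightarrow> bool" where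
  "has_cycle_type_1k_p n k p g \<longleftrightarrow>
     card {x\<in>{1..n}. g x = x} = k \<and>
     (\<forall>x\<in>{1..n}. g x \<noteq> x \<longrightarrow> least_power g x = p)"

end

theory Submission
  imports Defs
begin

(* A permutation g of prime order p has only fixed points and p-cycles, and every non-identity
   power of g generates the same cyclic group, so g is quasi-semiregular on k-subsets exactly
   when a unique k-subset W is g-invariant. Exchanging an invariant part of W for an invariant
   part of equal size of its complement, which is larger as 2k < n, would produce a second
   invariant k-subset. If p <= k, invariant p-subsets exist on both sides, hence k < p; then W
   contains no p-cycle, and exchanging single fixed points shows that W is the fixed-point set.
   The other n - k points are covered by p-cycles, so p divides n - k. Conversely, rotating
   consecutive blocks of length p inside {k+1..n} gives an element of order p fixing exactly
   {1..k}, and an invariant set with fewer than p elements consists of fixed points. *)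

lemma image_funpow_eq: "f ` A = A \<Longrightarrow> (f ^^ i) ` A = A"
proof (induction i)
  case (Suc i)
  have "(f ^^ Suc i) ` A = f ` (f ^^ i) ` A"
    by (simp add: image_comp)
  with Suc show ?case by simp
qed simp

lemma image_eq_if_fixed: "(\<And>x. x \<in> A \<Longrightarrow> f x = x) \<Longrightarrow> f ` A = A"
  by (metis image_cong image_ident)

lemma exchange_invariant_subsets:
  assumes "inj f" "f ` W = W" "finite W"
    and "C \<subseteq> W" "f ` C = C" "finite D" "D \<inter> W = {}" "f ` D = D" "card D = card C"
  shows "f ` (W - C \<union> D) = W - C \<union> D" and "card (W - C \<union> D) = card W"
proof -
  show "f ` (W - C \<union> D) = W - C \<union> D"
    using assms(1,2,5,8) by (simp add: image_Un image_set_diff)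
  have "card (W - C \<union> D) = card (W - C) + card D"
    using assms(3,6,7) by (intro card_Un_disjoint) auto
  also have "\<dots> = card W"
    using assms(3,4,9) card_Diff_subset[of C W] card_mono[of W C] finite_subset by fastforce
  finally show "card (W - C \<union> D) = card W" .
qed

locale prime_order_permutation =
  fixes g :: "'a \<Rightarrow> 'a" and p :: nat
  assumes permutation: "permutation g"
    and funpow_order: "g ^^ p = id"
    and prime_order: "prime p"
begin

lemma inj_perm: "inj g"
  using permutation permutation_bijective bij_is_inj by blast

lemma funpow_mod_order: "g ^^ (i mod p) = g ^^ i"
  using funpow_mod_eq[of p g] funpow_order by auto

lemma obtain_funpow_funpow_eq_self:
  assumes "\<not> p dvd i"
  obtains a where "(g ^^ i) ^^ a = g"
proof -
  have "gcd i p = 1"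
    using prime_order prime_imp_coprime[of p i] assms by (simp add: coprime_iff_gcd_eq_1 gcd.commute)
  moreover have "i \<noteq> 0"
    using assms by (metis dvd_0_right)
  ultimately obtain a b where "i * a = p * b + 1"
    using bezout_nat[of i p] by auto
  then have "i * a mod p = 1"
    using prime_gt_1_nat[OF prime_order] by (simp add: Suc_times_mod_eq)
  then have "(g ^^ i) ^^ a = g"
    using funpow_mod_order[of "i * a"] by (simp add: funpow_mult mult.commute)
  then show thesis ..
qed

lemma image_eq_if_funpow_image_eq:
  assumes "\<not> p dvd i" "(g ^^ i) ` A = A"
  shows "g ` A = A"
  using obtain_funpow_funpow_eq_self[OF assms(1)] image_funpow_eq[OF assms(2)] by metis

lemma least_power_eq_order:
  assumes "g x \<noteq> x"
  shows "least_power g x = p"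
proof -
  have "least_power g x dvd p"
    using least_power_dvd[OF permutation] funpow_order by simp
  moreover have "least_power g x \<noteq> 1"
    using least_power_gt_one[OF permutation assms] by simp
  ultimately show ?thesis
    using prime_order unfolding prime_nat_iff by (metis One_nat_def)
qed

lemma card_cycle:
  assumes "g x \<noteq> x"
  shows "card (set (support g x)) = p"
proof -
  have "card (set (support g x)) = least_power g x"
    using distinct_card[OF cycle_of_permutation[OF permutation, of x]] by simp
  with least_power_eq_order[OF assms] show ?thesis by simp
qed

lemma funpow_in_cycle: "(g ^^ i) x \<in> set (support g x)"
  unfolding support_set[OF permutation] by (rule rangeI)

lemma cycle_subset_invariant:
  assumes "g ` A = A" "x \<in> A"
  shows "set (support g x) \<subseteq> A"
proof
  fix y
  assume "y \<in> set (support g x)"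
  then obtain i where "y = (g ^^ i) x"
    unfolding support_set[OF permutation] by blast
  with image_funpow_eq[OF assms(1), of i] assms(2) show "y \<in> A"
    by blast
qed

lemma image_cycle: "g ` set (support g x) = set (support g x)"
proof (rule endo_inj_surj)
  show "g ` set (support g x) \<subseteq> set (support g x)"
  proof
    fix y
    assume "y \<in> g ` set (support g x)"
    then obtain i where "y = g ((g ^^ i) x)"
      unfolding support_set[OF permutation] by blast
    then have "y = (g ^^ Suc i) x"
      by simp
    then show "y \<in> set (support g x)"
      by (simp only: funpow_in_cycle)
  qed
  show "inj_on g (set (support g x))"
    using inj_perm by (rule inj_on_subset) simp
qed simp

lemma fixed_if_invariant_card_less:
  assumes "finite A" "g ` A = A" "card A < p" "x \<in> A"
  shows "g x = x"
proof (rule ccontr)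
  assume "g x \<noteq> x"
  then have "p \<le> card A"
    using card_cycle card_mono[OF assms(1) cycle_subset_invariant[OF assms(2,4)]] by simp
  with assms(3) show False by simp
qed

lemma invariant_subset_with_card_order:
  assumes "finite A" "g ` A = A" "p \<le> card A"
  obtains C where "C \<subseteq> A" "g ` C = C" "card C = p"
proof (cases "\<exists>x\<in>A. g x \<noteq> x")
  case True
  then obtain x where "x \<in> A" "g x \<noteq> x"
    by blast
  show thesis
    by (rule that[OF cycle_subset_invariant[OF assms(2) \<open>x \<in> A\<close>] image_cycle card_cycle[OF \<open>g x \<noteq> x\<close>]])
next
  case False
  obtain C where "C \<subseteq> A" "card C = p"
    using obtain_subset_with_card_n[OF assms(3)] by blast
  moreover from False \<open>C \<subseteq> A\<close> have "g ` C = C"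
    by (intro image_eq_if_fixed) blast
  ultimately show thesis
    using that by simp
qed

lemma order_dvd_card_moved: "p dvd card {x. g x \<noteq> x}"
proof -
  let ?cycles = "{set (support g x) | x. g x \<noteq> x}"
  have union: "\<Union> ?cycles = {x. g x \<noteq> x}"
    using support_coverture[OF permutation] .
  have "p * card ?cycles = card (\<Union> ?cycles)"
  proof (rule card_partition)
    show "finite (\<Union> ?cycles)"
      unfolding union using permutation_finite_support[OF permutation] .
    then show "finite ?cycles"
      by (rule finite_UnionD)
    show "card c = p" if "c \<in> ?cycles" for c
      using that card_cycle by auto
    show "c1 \<inter> c2 = {}" if "c1 \<in> ?cycles" "c2 \<in> ?cycles" "c1 \<noteq> c2" for c1 c2
    proof (rule disjointD[OF disjoint_support[OF permutation]])
      show "c1 \<in> range (\<lambda>x. set (support g x))" "c2 \<in> range (\<lambda>x. set (support g x))"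
        using that(1,2) by blast+
    qed (rule that(3))
  qed
  then have "card {x. g x \<noteq> x} = p * card ?cycles"
    by (simp only: union)
  then show ?thesis by simp
qed

lemma order_dvd_card_diff_fixed_points:
  assumes "g permutes S" "finite S"
  shows "p dvd card S - card {x \<in> S. g x = x}"
proof -
  have "{x. g x \<noteq> x} = S - {x \<in> S. g x = x}"
    using permutes_not_in[OF assms(1)] by blast
  then show ?thesis
    using order_dvd_card_moved assms(2) by (simp add: card_Diff_subset)
qed

end

locale unique_invariant_subset = prime_order_permutation +
  fixes S W :: "'a set"
  assumes permutes_S: "g permutes S"
    and finite_S: "finite S"
    and subset_S: "W \<subseteq> S"
    and nonempty: "W \<noteq> {}"
    and card_less_half: "2 * card W < card S"
    and invariant: "g ` W = W"
    and unique: "\<And>V. V \<subseteq> S \<Longrightarrow> card V = card W \<Longrightarrow> g ` V = V \<Longrightarrow> V = W"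
begin

lemma finite_W: "finite W"
  using finite_subset[OF subset_S finite_S] .

lemma invariant_complement: "g ` (S - W) = S - W"
  using permutes_image[OF permutes_S] invariant by (simp add: image_set_diff[OF inj_perm])

lemma card_complement: "card (S - W) = card S - card W"
  using card_Diff_subset[OF finite_W subset_S] .

lemma exchange_empty:
  assumes "C \<subseteq> W" "g ` C = C" "D \<subseteq> S - W" "g ` D = D" "card D = card C"
  shows "D = {}"
proof -
  let ?V = "W - C \<union> D"
  have "finite D"
    using finite_subset[OF assms(3)] finite_S by blast
  have "D \<inter> W = {}"
    using assms(3) by blast
  note exchange = exchange_invariant_subsets[OF inj_perm invariant finite_W assms(1,2)
      \<open>finite D\<close> \<open>D \<inter> W = {}\<close> assms(4,5)]
  have "?V \<subseteq> S"
    using assms(3) subset_S by blast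
  then have "?V = W"
    using exchange by (intro unique)
  with \<open>D \<inter> W = {}\<close> show "D = {}"
    by blast
qed

lemma card_less_order: "card W < p"
proof (rule ccontr)
  assume "\<not> card W < p"
  then obtain C where C: "C \<subseteq> W" "g ` C = C" "card C = p"
    using invariant_subset_with_card_order[OF finite_W invariant] by auto
  have "p \<le> card (S - W)"
    using \<open>\<not> card W < p\<close> card_less_half card_complement by simp
  then obtain D where D: "D \<subseteq> S - W" "g ` D = D" "card D = p"
    using invariant_subset_with_card_order[OF _ invariant_complement] finite_S by blast
  then have "D = {}"
    using C by (intro exchange_empty[OF C(1,2)]) simp_all
  with D(3) prime_gt_0_nat[OF prime_order] show False
    by simp
qed

lemma subset_fixed_points: "W \<subseteq> {x \<in> S. g x = x}"
  using fixed_if_invariant_card_less[OF finite_W invariant card_less_order] subset_S by auto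

lemma eq_fixed_points: "W = {x \<in> S. g x = x}"
proof (rule antisym[OF subset_fixed_points], rule subsetI, rule ccontr)
  fix y
  assume y: "y \<in> {x \<in> S. g x = x}" "y \<notin> W"
  obtain x where "x \<in> W"
    using nonempty by blast
  then have "g ` {x} = {x}"
    using subset_fixed_points by auto
  moreover have "g ` {y} = {y}" "{y} \<subseteq> S - W"
    using y by auto
  ultimately have "{y} = {}"
    using \<open>x \<in> W\<close> by (intro exchange_empty[of "{x}"]) simp_all
  then show False
    by simp
qed

end

lemma sym_group_pow: "g [^]\<^bsub>sym_group n\<^esub> (i::nat) = g ^^ i"
proof (induction i)
  case 0
  show ?case by (simp add: sym_group_one)
next
  case (Suc i)
  have "g [^]\<^bsub>sym_group n\<^esub> Suc i = (g ^^ i) \<circ> g"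
    using Suc by (simp add: sym_group_mult)
  then show ?case
    by (simp only: funpow_Suc_right)
qed

lemma sym_group_ord_eq_prime_iff:
  assumes "g \<in> carrier (sym_group n)" "prime p"
  shows "group.ord (sym_group n) g = p \<longleftrightarrow> g ^^ p = id \<and> g \<noteq> id"
proof -
  interpret group "sym_group n"
    by (rule sym_group_is_group)
  have "ord g = p \<longleftrightarrow> ord g dvd p \<and> ord g \<noteq> 1"
    using assms(2) by (auto simp: prime_nat_iff)
  also have "\<dots> \<longleftrightarrow> g ^^ p = id \<and> g \<noteq> id"
    using pow_eq_id[OF assms(1), of p] ord_eq_1[OF assms(1)] by (simp add: sym_group_pow sym_group_one)
  finally show ?thesis .
qed

locale sym_group_prime_order =
  fixes n :: nat and g :: "nat \<Rightarrow> nat" and p :: nat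
  assumes carrier: "g \<in> carrier (sym_group n)"
    and ord: "group.ord (sym_group n) g = p"
    and prime: "prime p"

sublocale sym_group_prime_order \<subseteq> prime_order_permutation g p
  using carrier ord prime sym_group_carrier' sym_group_ord_eq_prime_iff by unfold_locales blast+

context sym_group_prime_order
begin

lemma permutes_interval: "g permutes {1..n}"
  using carrier sym_group_carrier by blast

lemma generate_eq_range_funpow: "generate (sym_group n) {g} = range (\<lambda>i. g ^^ i)"
proof -
  have "group.ord (sym_group n) g \<noteq> 0"
    using ord prime by auto
  then show ?thesis
    using group.generate_pow_nat[OF sym_group_is_group carrier] by (auto simp: sym_group_pow)
qed

lemma fixed_by_generate_iff:
  "(\<forall>h \<in> generate (sym_group n) {g}. set_action h w = w) \<longleftrightarrow> g ` w = w"
proof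
  assume "\<forall>h \<in> generate (sym_group n) {g}. set_action h w = w"
  moreover have "g \<in> generate (sym_group n) {g}"
    unfolding generate_eq_range_funpow using rangeI[of "\<lambda>i. g ^^ i" 1] by simp
  ultimately show "g ` w = w"
    unfolding set_action_def by blast
next
  assume "g ` w = w"
  then show "\<forall>h \<in> generate (sym_group n) {g}. set_action h w = w"
    by (simp add: generate_eq_range_funpow set_action_def image_funpow_eq)
qed

lemma generate_fixing_non_invariant_eq_one:
  assumes "h \<in> generate (sym_group n) {g}" "set_action h w = w" "g ` w \<noteq> w"
  shows "h = \<one>\<^bsub>sym_group n\<^esub>"
proof -
  obtain i where i: "h = g ^^ i"
    using assms(1) unfolding generate_eq_range_funpow by blast
  have "p dvd i"
  proof (rule ccontr)
    assume "\<not> p dvd i"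
    moreover have "(g ^^ i) ` w = w"
      using assms(2) i by (simp add: set_action_def)
    ultimately show False
      using image_eq_if_funpow_image_eq assms(3) by metis
  qed
  have "g ^^ i = g ^^ (i mod p)"
    by (rule funpow_mod_order[symmetric])
  also have "\<dots> = id"
    using \<open>p dvd i\<close> by simp
  finally show ?thesis
    using i by (simp add: sym_group_one)
qed

lemma quasi_semiregular_iff_unique_invariant:
  "quasi_semiregular (sym_group n) set_action \<Omega> g \<longleftrightarrow> (\<exists>!w. w \<in> \<Omega> \<and> g ` w = w)"
proof
  assume "quasi_semiregular (sym_group n) set_action \<Omega> g"
  then obtain w0 where "w0 \<in> \<Omega>" and w0: "{w \<in> \<Omega>. g ` w = w} = {w0} \<and>
      (\<forall>w \<in> \<Omega> - {w0}. \<forall>h \<in> generate (sym_group n) {g}.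
        set_action h w = w \<longrightarrow> h = \<one>\<^bsub>sym_group n\<^esub>)"
    unfolding quasi_semiregular_def fixed_by_generate_iff ..
  from w0 have "{w \<in> \<Omega>. g ` w = w} = {w0}"
    by (rule conjunct1)
  then show "\<exists>!w. w \<in> \<Omega> \<and> g ` w = w"
    by (metis (mono_tags, lifting) mem_Collect_eq singletonD singletonI)
next
  assume "\<exists>!w. w \<in> \<Omega> \<and> g ` w = w"
  then obtain w0 where w0: "w0 \<in> \<Omega> \<and> g ` w0 = w0"
    and unique: "\<forall>w. w \<in> \<Omega> \<and> g ` w = w \<longrightarrow> w = w0"
    by (rule ex1E)
  have "w0 \<in> \<Omega>"
    using w0 by simp
  have "{w \<in> \<Omega>. g ` w = w} = {w0}"
    using w0 unique by blast
  moreover have "\<forall>w \<in> \<Omega> - {w0}. \<forall>h \<in> generate (sym_group n) {g}.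
      set_action h w = w \<longrightarrow> h = \<one>\<^bsub>sym_group n\<^esub>"
  proof (intro ballI impI)
    fix w h
    assume "w \<in> \<Omega> - {w0}" "h \<in> generate (sym_group n) {g}" "set_action h w = w"
    moreover from \<open>w \<in> \<Omega> - {w0}\<close> have "g ` w \<noteq> w"
      using unique by blast
    ultimately show "h = \<one>\<^bsub>sym_group n\<^esub>"
      using generate_fixing_non_invariant_eq_one by simp
  qed
  ultimately show "quasi_semiregular (sym_group n) set_action \<Omega> g"
    unfolding quasi_semiregular_def fixed_by_generate_iff using \<open>w0 \<in> \<Omega>\<close>
    by (intro bexI[of _ w0] conjI)
qed

end

(* rotates each block {p*q..<p*q+p} cyclically by one step *)
definition block_rotation :: "nat \<Rightarrow> nat \<Rightarrow> nat" where
  "block_rotation p x = p * (x div p) + (x + 1) mod p"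

definition translated :: "nat \<Rightarrow> nat \<Rightarrow> (nat \<Rightarrow> nat) \<Rightarrow> nat \<Rightarrow> nat" where
  "translated a m f x = (if a \<le> x \<and> x < a + m then a + f (x - a) else x)"

lemma funpow_block_rotation:
  assumes "0 < p"
  shows "(block_rotation p ^^ i) x = p * (x div p) + (x + i) mod p"
proof (induction i)
  case 0
  show ?case by simp
next
  case (Suc i)
  define y where "y = p * (x div p) + (x + i) mod p"
  have "y div p = x div p"
    using assms by (simp add: y_def)
  moreover have "(y + 1) mod p = (x + Suc i) mod p"
    unfolding y_def by (simp add: mod_Suc_eq)
  ultimately show ?case
    using Suc by (simp add: block_rotation_def y_def)
qed

lemma block_rotation_less:
  assumes "p dvd m" "x < m"
  shows "block_rotation p x < m"
proof -
  obtain t where t: "m = p * t"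
    using assms(1) by blast
  with assms(2) have "0 < p"
    by (cases "p = 0") auto
  from t assms(2) have "x div p < t"
    by (metis less_mult_imp_div_less mult.commute)
  have "p * (x div p) + (x + 1) mod p < p * (x div p + 1)"
    using \<open>0 < p\<close> by simp
  also have "\<dots> \<le> m"
    using \<open>x div p < t\<close> t by (simp del: mult_Suc_right add: Suc_le_eq)
  finally show ?thesis
    unfolding block_rotation_def .
qed

lemma funpow_order_block_rotation: "0 < p \<Longrightarrow> block_rotation p ^^ p = id"
  by (simp add: fun_eq_iff funpow_block_rotation)

lemma block_rotation_neq:
  assumes "1 < p"
  shows "block_rotation p x \<noteq> x"
proof -
  have "(x + 1) mod p \<noteq> x mod p"
    using assms by (simp add: mod_Suc)
  then show ?thesis
    unfolding block_rotation_def using mult_div_mod_eq[of p x] by linarith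
qed

lemma funpow_translated:
  assumes "\<And>y. y < m \<Longrightarrow> f y < m"
  shows "translated a m f ^^ i = translated a m (f ^^ i)"
proof (induction i)
  case 0
  show ?case
    by (simp add: fun_eq_iff translated_def)
next
  case (Suc i)
  have "(f ^^ i) y < m" if "y < m" for y
    using that assms by (induction i) auto
  then show ?case
    using Suc by (auto simp: fun_eq_iff translated_def)
qed

lemma obtain_prime_order_permutation_fixing_initial_segment:
  assumes "prime p" "p dvd n - k" "k < n"
  obtains g where "g permutes {1..n}" "g ^^ p = id" "g \<noteq> id" "{x \<in> {1..n}. g x = x} = {1..k}"
proof -
  define g where "g = translated (Suc k) (n - k) (block_rotation p)"
  have "1 < p" "0 < p"
    using prime_gt_1_nat[OF assms(1)] by auto
  have "g ^^ p = translated (Suc k) (n - k) (block_rotation p ^^ p)"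
    unfolding g_def by (rule funpow_translated) (rule block_rotation_less[OF assms(2)])
  also have "\<dots> = id"
    unfolding funpow_order_block_rotation[OF \<open>0 < p\<close>] by (simp add: fun_eq_iff translated_def)
  finally have "g ^^ p = id" .
  have fixed_iff: "g x = x \<longleftrightarrow> x \<notin> {Suc k..n}" for x
    using block_rotation_neq[OF \<open>1 < p\<close>, of "x - Suc k"] assms(3)
    by (auto simp: g_def translated_def)
  have "bij g"
  proof (rule o_bij)
    have "g ^^ Suc (p - 1) = id"
      using \<open>g ^^ p = id\<close> \<open>0 < p\<close> by simp
    then show "g \<circ> g ^^ (p - 1) = id" "g ^^ (p - 1) \<circ> g = id"
      by (simp only: funpow.simps(2), simp only: funpow_Suc_right)
  qed
  have "g permutes {1..n}"
    unfolding permutes_def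
  proof (intro conjI allI impI)
    show "g x = x" if "x \<notin> {1..n}" for x
      using that fixed_iff by simp
    show "\<exists>!x. g x = y" for y
      using \<open>bij g\<close> unfolding bij_iff by blast
  qed
  moreover have "g \<noteq> id"
  proof
    assume "g = id"
    with fixed_iff[of n] assms(3) show False
      by simp
  qed
  moreover have "{x \<in> {1..n}. g x = x} = {1..k}"
    unfolding fixed_iff using assms(3) by auto
  ultimately show thesis
    using \<open>g ^^ p = id\<close> by (intro that)
qed

lemma quasi_semiregular_k_subsets_necessary:
  assumes "1 \<le> k" "2 * k < n" "prime p"
    and "g \<in> carrier (sym_group n)" "group.ord (sym_group n) g = p"
    and "quasi_semiregular (sym_group n) set_action (k_subsets n k) g"
  shows "k < p" "p dvd n - k" "has_cycle_type_1k_p n k p g"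
proof -
  interpret sym_group_prime_order n g p
    using assms(3-5) by unfold_locales
  have "\<exists>!w. w \<in> k_subsets n k \<and> g ` w = w"
    using quasi_semiregular_iff_unique_invariant assms(6) by simp
  then obtain W where W: "W \<in> k_subsets n k \<and> g ` W = W"
    and W_unique: "\<forall>V. V \<in> k_subsets n k \<and> g ` V = V \<longrightarrow> V = W"
    by (rule ex1E)
  have "W \<subseteq> {1..n}" "card W = k" "g ` W = W"
    using W by (auto simp: k_subsets_def)
  interpret unique_invariant_subset g p "{1..n}" W
  proof
    show "g permutes {1..n}" "finite {1..n}" "W \<subseteq> {1..n}" "g ` W = W"
      using permutes_interval \<open>W \<subseteq> {1..n}\<close> \<open>g ` W = W\<close> by simp_all
    show "W \<noteq> {}" "2 * card W < card {1..n}"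
      using \<open>card W = k\<close> assms(1,2) by auto
    show "V = W" if "V \<subseteq> {1..n}" "card V = card W" "g ` V = V" for V
      using that \<open>card W = k\<close> by (intro W_unique[rule_format]) (simp add: k_subsets_def)
  qed
  show "k < p"
    using card_less_order \<open>card W = k\<close> by simp
  have card_fixed: "card {x \<in> {1..n}. g x = x} = k"
    using \<open>card W = k\<close> by (simp only: eq_fixed_points[symmetric])
  show "p dvd n - k"
    using order_dvd_card_diff_fixed_points[OF permutes_interval] card_fixed by simp
  show "has_cycle_type_1k_p n k p g"
    unfolding has_cycle_type_1k_p_def using card_fixed least_power_eq_order by simp
qed

lemma quasi_semiregular_k_subsets_sufficient:
  assumes "2 * k < n" "prime p" "k < p" "p dvd n - k"
  shows "\<exists>g \<in> carrier (sym_group n). group.ord (sym_group n) g = p \<and>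
           quasi_semiregular (sym_group n) set_action (k_subsets n k) g"
proof -
  have "k < n"
    using assms(1) by simp
  then obtain g where g: "g permutes {1..n}" "g ^^ p = id" "g \<noteq> id"
    and fixed: "{x \<in> {1..n}. g x = x} = {1..k}"
    by (rule obtain_prime_order_permutation_fixing_initial_segment[OF assms(2,4)])
  have carrier: "g \<in> carrier (sym_group n)"
    using g(1) sym_group_carrier by blast
  have ord: "group.ord (sym_group n) g = p"
    using sym_group_ord_eq_prime_iff[OF carrier assms(2)] g(2,3) by simp
  interpret sym_group_prime_order n g p
    using carrier ord assms(2) by unfold_locales
  have "{1..k} \<in> k_subsets n k \<and> g ` {1..k} = {1..k}"
    using \<open>k < n\<close> fixed by (auto simp: k_subsets_def intro!: image_eq_if_fixed)
  moreover have "w = {1..k}" if "w \<in> k_subsets n k \<and> g ` w = w" for w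
  proof -
    have w: "w \<subseteq> {1..n}" "g ` w = w" "card w = k"
      using that by (auto simp: k_subsets_def)
    have "\<forall>x \<in> w. g x = x"
      using fixed_if_invariant_card_less[OF finite_subset[OF w(1)] w(2)] w(3) assms(3) by simp
    then have "w \<subseteq> {1..k}"
      unfolding fixed[symmetric] using w(1) by blast
    then show "w = {1..k}"
      using w(3) by (intro card_subset_eq) simp_all
  qed
  ultimately have "\<exists>!w. w \<in> k_subsets n k \<and> g ` w = w"
    by (rule ex1I)
  then have "quasi_semiregular (sym_group n) set_action (k_subsets n k) g"
    using quasi_semiregular_iff_unique_invariant by simp
  with carrier ord show ?thesis
    by (intro bexI[of _ g] conjI)
qed

theorem proposition6p2:
  fixes n k p :: nat
  assumes "1 \<le> k" and "2 * k < n" and "prime p"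
  shows "((\<exists>g\<in>carrier (sym_group n). group.ord (sym_group n) g = p \<and>
             quasi_semiregular (sym_group n) set_action (k_subsets n k) g)
          \<longleftrightarrow> (k < p \<and> p dvd (n - k)))
       \<and> (\<forall>g\<in>carrier (sym_group n). group.ord (sym_group n) g = p \<and>
             quasi_semiregular (sym_group n) set_action (k_subsets n k) g
             \<longrightarrow> has_cycle_type_1k_p n k p g)"
proof (intro conjI)
  show "(\<exists>g\<in>carrier (sym_group n). group.ord (sym_group n) g = p \<and>
      quasi_semiregular (sym_group n) set_action (k_subsets n k) g) \<longleftrightarrow> (k < p \<and> p dvd (n - k))"
    using quasi_semiregular_k_subsets_necessary(1,2)[OF assms]
      quasi_semiregular_k_subsets_sufficient[OF assms(2,3)] by blast
  show "\<forall>g\<in>carrier (sym_group n). group.ord (sym_group n) g = p \<and>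
      quasi_semiregular (sym_group n) set_action (k_subsets n k) g \<longrightarrow> has_cycle_type_1k_p n k p g"
    using quasi_semiregular_k_subsets_necessary(3)[OF assms] by blast
qed

end
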